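(* Let $F=\begin{pmatrix}-1&-1&-1\\-1&8&-1\\-1&-1&-1\end{pmatrix}$ (edge detect C filter). Then for all $m,n\in\mathbb{N}$, it is not the case that the equation $F*X=B$ with the periodic boundary condition, for unknown $X\in\mathbb{R}^{m\times n}$, has a unique solution for every $B\in\mathbb{R}^{m\times n}$.
   Context: For $F=[f_{ij}]\in\mathbb{R}^{3\times3}$ and $X=[x_{ij}]\in\mathbb{R}^{m\times n}$, the convolution $F*X\in\mathbb{R}^{m\times n}$ is defined by $[F*X]_{ij}=\sum_{l_1=1}^3\sum_{l_2=1}^3 f_{l_1l_2}\,x_{i-l_1+2,\,j-l_2+2}$ for $1\le i\le m$, $1\le j\le n$, where the periodic boundary condition sets $x_{0j}=x_{mj}$, $x_{m+1,j}=x_{1j}$, $x_{i0}=x_{in}$, $x_{i,n+1}=x_{i1}$ (for all indices $i\in\{0,\dots,m+1\}$, $j\in\{0,\dots,n+1\}$, so corners are also determined, e.g. $x_{00}=x_{mn}$). *)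

theory Defs
  imports Complex_Main
begin

text \<open>m x n real matrices are represented as functions nat => nat => real,
  indexed by 1..m and 1..n, and zero outside this index range.\<close>

definition mats :: "nat \<Rightarrow> nat \<Rightarrow> (nat \<Rightarrow> nat \<Rightarrow> real) set" where
  "mats m n = {X. \<forall>i j. (i \<notin> {1..m} \<or> j \<notin> {1..n}) \<longrightarrow> X i j = 0}"

definition per :: "nat \<Rightarrow> nat \<Rightarrow> nat" where
  "per k i = (if i = 0 then k else if i = k + 1 then 1 else i)"

definition conv :: "(nat \<Rightarrow> nat \<Rightarrow> real) \<Rightarrow> nat \<Rightarrow> nat \<Rightarrow> (nat \<Rightarrow> nat \<Rightarrow> real)
    \<Rightarrow> nat \<Rightarrow> nat \<Rightarrow> real" where
  "conv F m n X i j =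
     (\<Sum>l1\<in>{1..3}. \<Sum>l2\<in>{1..3}. F l1 l2 * X (per m (i + 2 - l1)) (per n (j + 2 - l2)))"

definition edgeC :: "nat \<Rightarrow> nat \<Rightarrow> real" where
  "edgeC l1 l2 = (if l1 = 2 \<and> l2 = 2 then 8 else -1)"

end

theory Submission
  imports Defs
begin

text \<open>The entries of the edge detect C filter sum to zero, so convolution with it annihilates
  every constant matrix. Hence the all-ones matrix and the zero matrix are two distinct solutions
  of \<open>F * X = 0\<close>, and uniqueness fails for \<open>B = 0\<close>.\<close>

definition ones_mat :: "nat \<Rightarrow> nat \<Rightarrow> nat \<Rightarrow> nat \<Rightarrow> real" where
  "ones_mat m n = (\<lambda>i j. if i \<in> {1..m} \<and> j \<in> {1..n} then 1 else 0)"

lemma ones_mat_in_mats: "ones_mat m n \<in> mats m n"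
  by (auto simp: mats_def ones_mat_def)

lemma zero_in_mats: "(\<lambda>i j. 0) \<in> mats m n"
  by (simp add: mats_def)

lemma per_in_range: "1 \<le> k \<Longrightarrow> i \<le> Suc k \<Longrightarrow> per k i \<in> {1..k}"
  unfolding per_def by auto

lemma conv_zero: "conv F m n (\<lambda>i j. 0) i j = 0"
  by (simp add: conv_def)

lemma conv_ones_mat:
  assumes "i \<in> {1..m}" and "j \<in> {1..n}"
  shows "conv F m n (ones_mat m n) i j = (\<Sum>l1\<in>{1..3}. \<Sum>l2\<in>{1..3}. F l1 l2)"
  unfolding conv_def
proof (intro sum.cong refl)
  fix l1 l2 :: nat
  assume "l1 \<in> {1..3}" "l2 \<in> {1..3}"
  with assms have "per m (i + 2 - l1) \<in> {1..m}" and "per n (j + 2 - l2) \<in> {1..n}"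
    using per_in_range[of m "i + 2 - l1"] per_in_range[of n "j + 2 - l2"] by auto
  then show "F l1 l2 * ones_mat m n (per m (i + 2 - l1)) (per n (j + 2 - l2)) = F l1 l2"
    by (simp add: ones_mat_def)
qed

lemma edgeC_sum: "(\<Sum>l1\<in>{1..3}. \<Sum>l2\<in>{1..3}. edgeC l1 l2) = 0"
proof -
  have "{1..3::nat} = {1, 2, 3}" by auto
  then show ?thesis by (simp add: edgeC_def)
qed

theorem conv_not_uniquely_solvable_if_sum_zero:
  assumes sum_zero: "(\<Sum>l1\<in>{1..3}. \<Sum>l2\<in>{1..3}. F l1 l2) = 0"
    and "m \<ge> 1" and "n \<ge> 1"
  shows "\<not> (\<forall>B \<in> mats m n. \<exists>!X. X \<in> mats m n \<and>
            (\<forall>i\<in>{1..m}. \<forall>j\<in>{1..n}. conv F m n X i j = B i j))"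
proof
  assume solvable: "\<forall>B \<in> mats m n. \<exists>!X. X \<in> mats m n \<and>
            (\<forall>i\<in>{1..m}. \<forall>j\<in>{1..n}. conv F m n X i j = B i j)"
  have unique: "\<exists>!X. X \<in> mats m n \<and> (\<forall>i\<in>{1..m}. \<forall>j\<in>{1..n}. conv F m n X i j = 0)"
    using bspec[OF solvable zero_in_mats] by simp
  have "ones_mat m n \<in> mats m n \<and> (\<forall>i\<in>{1..m}. \<forall>j\<in>{1..n}. conv F m n (ones_mat m n) i j = 0)"
    using ones_mat_in_mats conv_ones_mat sum_zero by simp
  moreover have "(\<lambda>i j. 0) \<in> mats m n \<and> (\<forall>i\<in>{1..m}. \<forall>j\<in>{1..n}. conv F m n (\<lambda>i j. 0) i j = 0)"
    using zero_in_mats conv_zero by simp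
  ultimately have "ones_mat m n = (\<lambda>i j. 0)"
    using unique by blast
  then have "ones_mat m n 1 1 = 0" by simp
  with \<open>m \<ge> 1\<close> \<open>n \<ge> 1\<close> show False by (simp add: ones_mat_def)
qed

theorem corollary14:
  fixes m n :: nat
  assumes "m \<ge> 1" and "n \<ge> 1"
  shows "\<not> (\<forall>B \<in> mats m n. \<exists>!X. X \<in> mats m n \<and>
            (\<forall>i\<in>{1..m}. \<forall>j\<in>{1..n}. conv edgeC m n X i j = B i j))"
  using conv_not_uniquely_solvable_if_sum_zero[OF edgeC_sum assms] .

end
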